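(* Let $G$ be an edge-coloured digraph. Then $\mathscr{X}_G(x)\in\mathrm{QSym}(x)$.
   Context: An edge-coloured digraph is a finite simple digraph $G$ (no loops; for distinct vertices $a,b$ at most one edge from $a$ to $b$) in which every edge is of one of three types: dashed ($a\dashrightarrow b$), solid ($a\rightarrow b$) or double ($a\Rightarrow b$). A proper vertex-colouring is $\kappa:V(G)\to\mathbb{P}$ with $\kappa(a)\ne\kappa(b)$ for dashed edges $(a,b)$, $\kappa(a)<\kappa(b)$ for solid, $\kappa(a)\le\kappa(b)$ for double. $\mathscr{X}_G(x)=\sum_\kappa\prod_{a\in V(G)}x_{\kappa(a)}$ summed over proper vertex-colourings, in commuting variables $x_1,x_2,\dots$. $\mathrm{QSym}(x)$ is the set of bounded-degree formal power series such that for each composition $(\alpha_1,\dots,\alpha_k)$ all monomials $x_{i_1}^{\alpha_1}\cdots x_{i_k}^{\alpha_k}$ with $i_1<\dots<i_k$ have the same coefficient. *)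

theory Defs
  imports Main
begin

datatype edge_type = Dashed | Solid | Double

text \<open>An edge-coloured digraph on the vertex set V: the partial map E assigns to an
  ordered pair (a,b) the type of the (unique, if any) edge from a to b.\<close>
definition ec_digraph :: "'v set \<Rightarrow> ('v \<times> 'v \<Rightarrow> edge_type option) \<Rightarrow> bool" where
  "ec_digraph V E \<longleftrightarrow> finite V \<and> (\<forall>a. E (a, a) = None) \<and>
     (\<forall>a b. E (a, b) \<noteq> None \<longrightarrow> a \<in> V \<and> b \<in> V)"

text \<open>Proper vertex-colourings with positive integer colours (represented as nat \<ge> 1);
  colourings are taken extensional (value 0 outside V) so they correspond 1-1 to maps V \<rightarrow> \<bbbP>.\<close>
definition proper_colouring :: "'v set \<Rightarrow> ('v \<times> 'v \<Rightarrow> edge_type option) \<Rightarrow> ('v \<Rightarrow> nat) \<Rightarrow> bool" where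
  "proper_colouring V E \<kappa> \<longleftrightarrow>
     (\<forall>a\<in>V. 1 \<le> \<kappa> a) \<and> (\<forall>a. a \<notin> V \<longrightarrow> \<kappa> a = 0) \<and>
     (\<forall>a b. E (a, b) = Some Dashed \<longrightarrow> \<kappa> a \<noteq> \<kappa> b) \<and>
     (\<forall>a b. E (a, b) = Some Solid \<longrightarrow> \<kappa> a < \<kappa> b) \<and>
     (\<forall>a b. E (a, b) = Some Double \<longrightarrow> \<kappa> a \<le> \<kappa> b)"

text \<open>Formal power series in commuting variables x_1, x_2, ... are represented by their
  coefficient function on monomials; a monomial is an exponent vector m :: nat \<Rightarrow> nat
  (m i = exponent of x_i).\<close>
type_synonym 'a mseries = "(nat \<Rightarrow> nat) \<Rightarrow> 'a"

text \<open>The chromatic series: coefficient of the monomial m is the number of proper colourings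
  \<kappa> with \<Prod>_a x_{\<kappa> a} = m, i.e. exactly m i vertices coloured i for every i.\<close>
definition chrom_series :: "'v set \<Rightarrow> ('v \<times> 'v \<Rightarrow> edge_type option) \<Rightarrow> nat mseries" where
  "chrom_series V E m = card {\<kappa>. proper_colouring V E \<kappa> \<and> (\<forall>i. card {a\<in>V. \<kappa> a = i} = m i)}"

text \<open>The monomial x_{i_1}^{\<alpha>_1} \<cdots> x_{i_k}^{\<alpha>_k}.\<close>
definition mono_of :: "nat list \<Rightarrow> nat list \<Rightarrow> nat \<Rightarrow> nat" where
  "mono_of is \<alpha> n = (\<Sum>t<length is. if is ! t = n then \<alpha> ! t else 0)"

definition is_composition :: "nat list \<Rightarrow> bool" where
  "is_composition \<alpha> \<longleftrightarrow> (\<forall>p\<in>set \<alpha>. 0 < p)"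

text \<open>Membership in QSym(x): the series lives in the variables x_1, x_2, ... (monomials with
  nonzero coefficient are finitely supported and do not involve index 0), has bounded degree,
  and is quasisymmetric.\<close>
definition QSym :: "'a::zero mseries set" where
  "QSym = {f.
     (\<forall>m. f m \<noteq> 0 \<longrightarrow> finite {i. m i \<noteq> 0} \<and> m 0 = 0) \<and>
     (\<exists>d. \<forall>m. f m \<noteq> 0 \<longrightarrow> (\<Sum>i\<in>{i. m i \<noteq> 0}. m i) \<le> d) \<and>
     (\<forall>\<alpha> is js. is_composition \<alpha> \<and> length is = length \<alpha> \<and> length js = length \<alpha> \<and>
        sorted_wrt (<) is \<and> sorted_wrt (<) js \<and> (\<forall>i\<in>set is. 1 \<le> i) \<and> (\<forall>j\<in>set js. 1 \<le> j)
        \<longrightarrow> f (mono_of is \<alpha>) = f (mono_of js \<alpha>))}"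

end

theory Submission
  imports Defs
begin

text \<open>A proper colouring only constrains, for each edge, the relative order of the colours at its
  ends. Hence recolouring along an order isomorphism between two sets of positive colours maps
  proper colourings to proper colourings, and it carries the colourings with monomial
  \<open>x\<^sub>i\<^sub>1\<^sup>\<alpha>\<^sub>1 \<cdots> x\<^sub>i\<^sub>k\<^sup>\<alpha>\<^sub>k\<close> bijectively onto those with monomial
  \<open>x\<^sub>j\<^sub>1\<^sup>\<alpha>\<^sub>1 \<cdots> x\<^sub>j\<^sub>k\<^sup>\<alpha>\<^sub>k\<close> when \<open>i\<^sub>1 < \<dots> < i\<^sub>k\<close> and \<open>j\<^sub>1 < \<dots> < j\<^sub>k\<close>.
  The degree is bounded because every monomial of the series has degree \<open>|V|\<close>.\<close>

definition colour_count :: "'v set \<Rightarrow> ('v \<Rightarrow> nat) \<Rightarrow> nat \<Rightarrow> nat" where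
  "colour_count V \<kappa> i = card {a\<in>V. \<kappa> a = i}"

definition proper_colourings :: "'v set \<Rightarrow> ('v \<times> 'v \<Rightarrow> edge_type option) \<Rightarrow> (nat \<Rightarrow> nat) \<Rightarrow> ('v \<Rightarrow> nat) set" where
  "proper_colourings V E m = {\<kappa>. proper_colouring V E \<kappa> \<and> colour_count V \<kappa> = m}"

lemma chrom_series_eq_card: "chrom_series V E m = card (proper_colourings V E m)"
  by (simp add: chrom_series_def proper_colourings_def colour_count_def fun_eq_iff)

lemma colour_count_support:
  assumes "finite V"
  shows "{i. colour_count V \<kappa> i \<noteq> 0} = \<kappa> ` V"
  using assms by (auto simp: colour_count_def)

lemma sum_colour_count:
  assumes "finite V"
  shows "(\<Sum>i\<in>{i. colour_count V \<kappa> i \<noteq> 0}. colour_count V \<kappa> i) = card V"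
  unfolding colour_count_support[OF assms]
  using sum.image_gen[OF assms, of "\<lambda>_. 1::nat" \<kappa>] by (simp add: colour_count_def)

lemma proper_colouring_pos: "proper_colouring V E \<kappa> \<Longrightarrow> 0 \<notin> \<kappa> ` V"
  by (force simp: proper_colouring_def)

lemma colours_of_proper_colourings:
  assumes "ec_digraph V E" "\<kappa> \<in> proper_colourings V E m"
  shows "\<kappa> ` V = {i. m i \<noteq> 0}"
  using assms colour_count_support[of V \<kappa>] by (simp add: proper_colourings_def ec_digraph_def)

lemma chrom_series_nonzero:
  assumes G: "ec_digraph V E" and "chrom_series V E m \<noteq> 0"
  shows "finite {i. m i \<noteq> 0} \<and> m 0 = 0 \<and> (\<Sum>i\<in>{i. m i \<noteq> 0}. m i) = card V"
proof -
  have "proper_colourings V E m \<noteq> {}"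
    using assms(2) by (auto simp: chrom_series_eq_card)
  then obtain \<kappa> where \<kappa>: "\<kappa> \<in> proper_colourings V E m"
    by blast
  then have support: "{i. m i \<noteq> 0} = \<kappa> ` V" and m: "m = colour_count V \<kappa>"
    using colours_of_proper_colourings[OF G] by (auto simp: proper_colourings_def)
  have fin: "finite V" using G by (simp add: ec_digraph_def)
  then have "finite {i. m i \<noteq> 0}"
    using support by simp
  moreover have "m 0 = 0"
    using support \<kappa> proper_colouring_pos unfolding proper_colourings_def by blast
  moreover have "(\<Sum>i\<in>{i. m i \<noteq> 0}. m i) = card V"
    unfolding m by (rule sum_colour_count[OF fin])
  ultimately show ?thesis by blast
qed

definition recolour :: "'v set \<Rightarrow> (nat \<Rightarrow> nat) \<Rightarrow> ('v \<Rightarrow> nat) \<Rightarrow> 'v \<Rightarrow> nat" where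
  "recolour V f \<kappa> a = (if a \<in> V then f (\<kappa> a) else 0)"

lemma proper_colouring_recolour:
  assumes G: "ec_digraph V E" and \<kappa>: "proper_colouring V E \<kappa>"
    and f: "strict_mono_on (\<kappa> ` V) f" "0 \<notin> f ` \<kappa> ` V"
  shows "proper_colouring V E (recolour V f \<kappa>)"
proof -
  have ends: "a \<in> V" "b \<in> V" if "E (a, b) = Some e" for a b e
    using G that by (auto simp: ec_digraph_def)
  have less: "f (\<kappa> a) < f (\<kappa> b) \<longleftrightarrow> \<kappa> a < \<kappa> b"
    and le: "f (\<kappa> a) \<le> f (\<kappa> b) \<longleftrightarrow> \<kappa> a \<le> \<kappa> b"
    and eq: "f (\<kappa> a) = f (\<kappa> b) \<longleftrightarrow> \<kappa> a = \<kappa> b" if "a \<in> V" "b \<in> V" for a b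
    using that strict_mono_on_less[OF f(1)] strict_mono_on_less_eq[OF f(1)]
      strict_mono_on_eq[OF f(1)] by auto
  show ?thesis
    unfolding proper_colouring_def
  proof (intro conjI allI impI ballI)
    fix a assume "a \<in> V"
    then have "f (\<kappa> a) \<noteq> 0" using f(2) by (metis imageI)
    then show "1 \<le> recolour V f \<kappa> a" using \<open>a \<in> V\<close> by (simp add: recolour_def)
  next
    fix a assume "a \<notin> V"
    then show "recolour V f \<kappa> a = 0" by (simp add: recolour_def)
  next
    fix a b assume e: "E (a, b) = Some Dashed"
    then have "\<kappa> a \<noteq> \<kappa> b" using \<kappa> by (simp add: proper_colouring_def)
    then show "recolour V f \<kappa> a \<noteq> recolour V f \<kappa> b"
      using eq ends[OF e] by (simp add: recolour_def)
  next
    fix a b assume e: "E (a, b) = Some Solid"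
    then have "\<kappa> a < \<kappa> b" using \<kappa> by (simp add: proper_colouring_def)
    then show "recolour V f \<kappa> a < recolour V f \<kappa> b"
      using less ends[OF e] by (simp add: recolour_def)
  next
    fix a b assume e: "E (a, b) = Some Double"
    then have "\<kappa> a \<le> \<kappa> b" using \<kappa> by (simp add: proper_colouring_def)
    then show "recolour V f \<kappa> a \<le> recolour V f \<kappa> b"
      using le ends[OF e] by (simp add: recolour_def)
  qed
qed

lemma colour_count_recolour:
  assumes "inj_on f S" "\<kappa> ` V \<subseteq> S" "c \<in> S"
  shows "colour_count V (recolour V f \<kappa>) (f c) = colour_count V \<kappa> c"
proof -
  have "{a\<in>V. recolour V f \<kappa> a = f c} = {a\<in>V. \<kappa> a = c}"
    using assms by (auto simp: recolour_def inj_on_eq_iff)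
  then show ?thesis by (simp add: colour_count_def)
qed

lemma colour_count_recolour_eq_0:
  assumes "\<kappa> ` V \<subseteq> S" "j \<notin> f ` S"
  shows "colour_count V (recolour V f \<kappa>) j = 0"
proof -
  have "{a\<in>V. recolour V f \<kappa> a = j} = {}"
    using assms by (auto simp: recolour_def)
  then show ?thesis unfolding colour_count_def by (simp only: card.empty)
qed

lemma recolour_recolour:
  assumes "proper_colouring V E \<kappa>" "\<forall>c\<in>\<kappa> ` V. g (f c) = c"
  shows "recolour V g (recolour V f \<kappa>) = \<kappa>"
  using assms by (auto simp: recolour_def proper_colouring_def fun_eq_iff)

lemma recolour_mem_proper_colourings:
  fixes \<phi> \<psi> :: "'i::linorder \<Rightarrow> nat"
  assumes G: "ec_digraph V E"
    and \<phi>: "strict_mono_on I \<phi>" and \<psi>: "strict_mono_on I \<psi>" "0 \<notin> \<psi> ` I"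
    and m: "{i. m i \<noteq> 0} \<subseteq> \<phi> ` I" and m': "{j. m' j \<noteq> 0} \<subseteq> \<psi> ` I"
    and m_m': "\<forall>t\<in>I. m (\<phi> t) = m' (\<psi> t)"
    and \<kappa>: "\<kappa> \<in> proper_colourings V E m"
  shows "recolour V (\<psi> \<circ> the_inv_into I \<phi>) \<kappa> \<in> proper_colourings V E m'"
proof -
  let ?f = "\<psi> \<circ> the_inv_into I \<phi>"
  have inv: "the_inv_into I \<phi> (\<phi> t) = t" if "t \<in> I" for t
    using the_inv_into_f_f[OF strict_mono_on_imp_inj_on[OF \<phi>] that] .
  from \<kappa> have P: "proper_colouring V E \<kappa>" and count: "colour_count V \<kappa> = m"
    by (auto simp: proper_colourings_def)
  have colours: "\<kappa> ` V \<subseteq> \<phi> ` I"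
    using m colours_of_proper_colourings[OF G \<kappa>] by simp
  have mono: "strict_mono_on (\<phi> ` I) ?f"
    by (rule strict_mono_onI)
      (auto simp: inv strict_mono_on_less[OF \<phi>] intro: strict_mono_onD[OF \<psi>(1)])
  have img: "?f ` \<phi> ` I = \<psi> ` I"
    by (force simp: inv image_image)
  have "?f ` \<kappa> ` V \<subseteq> \<psi> ` I"
    using img colours by (metis image_mono)
  then have "0 \<notin> ?f ` \<kappa> ` V"
    using \<psi>(2) by blast
  then have "proper_colouring V E (recolour V ?f \<kappa>)"
    by (rule proper_colouring_recolour[OF G P monotone_on_subset[OF mono colours]])
  moreover have "colour_count V (recolour V ?f \<kappa>) j = m' j" for j
  proof (cases "j \<in> \<psi> ` I")
    case True
    then obtain t where t: "t \<in> I" "j = \<psi> t" by blast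
    then have "j = ?f (\<phi> t)" by (simp add: inv)
    then have "colour_count V (recolour V ?f \<kappa>) j = colour_count V \<kappa> (\<phi> t)"
      using colour_count_recolour[OF strict_mono_on_imp_inj_on[OF mono] colours] t(1) by simp
    then show ?thesis
      using count m_m' t by simp
  next
    case False
    then have "j \<notin> ?f ` \<phi> ` I" and "m' j = 0"
      using img m' by auto
    then show ?thesis
      using colour_count_recolour_eq_0[OF colours] by simp
  qed
  ultimately show ?thesis by (auto simp: proper_colourings_def)
qed

lemma recolour_order_embeddings_inverse:
  assumes G: "ec_digraph V E" and "inj_on \<phi> I" "inj_on \<psi> I"
    and m: "{i. m i \<noteq> 0} \<subseteq> \<phi> ` I" and \<kappa>: "\<kappa> \<in> proper_colourings V E m"
  shows "recolour V (\<phi> \<circ> the_inv_into I \<psi>) (recolour V (\<psi> \<circ> the_inv_into I \<phi>) \<kappa>) = \<kappa>"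
proof (rule recolour_recolour)
  show "proper_colouring V E \<kappa>"
    using \<kappa> by (simp add: proper_colourings_def)
  have "\<kappa> ` V \<subseteq> \<phi> ` I"
    using m colours_of_proper_colourings[OF G \<kappa>] by simp
  then show "\<forall>c\<in>\<kappa> ` V. (\<phi> \<circ> the_inv_into I \<psi>) ((\<psi> \<circ> the_inv_into I \<phi>) c) = c"
    using assms(2,3) by (auto simp: the_inv_into_f_f)
qed

lemma chrom_series_eq_if_order_embeddings:
  fixes \<phi> \<psi> :: "'i::linorder \<Rightarrow> nat"
  assumes G: "ec_digraph V E"
    and \<phi>: "strict_mono_on I \<phi>" "0 \<notin> \<phi> ` I" and \<psi>: "strict_mono_on I \<psi>" "0 \<notin> \<psi> ` I"
    and m: "{i. m i \<noteq> 0} \<subseteq> \<phi> ` I" and m': "{j. m' j \<noteq> 0} \<subseteq> \<psi> ` I"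
    and m_m': "\<forall>t\<in>I. m (\<phi> t) = m' (\<psi> t)"
  shows "chrom_series V E m = chrom_series V E m'"
proof -
  have "bij_betw (recolour V (\<psi> \<circ> the_inv_into I \<phi>))
      (proper_colourings V E m) (proper_colourings V E m')"
  proof (rule bij_betw_byWitness[where f' = "recolour V (\<phi> \<circ> the_inv_into I \<psi>)"])
    show "\<forall>\<kappa>\<in>proper_colourings V E m.
        recolour V (\<phi> \<circ> the_inv_into I \<psi>) (recolour V (\<psi> \<circ> the_inv_into I \<phi>) \<kappa>) = \<kappa>"
      using recolour_order_embeddings_inverse[OF G _ _ m]
        strict_mono_on_imp_inj_on[OF \<phi>(1)] strict_mono_on_imp_inj_on[OF \<psi>(1)] by blast
    show "\<forall>\<kappa>\<in>proper_colourings V E m'.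
        recolour V (\<psi> \<circ> the_inv_into I \<phi>) (recolour V (\<phi> \<circ> the_inv_into I \<psi>) \<kappa>) = \<kappa>"
      using recolour_order_embeddings_inverse[OF G _ _ m']
        strict_mono_on_imp_inj_on[OF \<phi>(1)] strict_mono_on_imp_inj_on[OF \<psi>(1)] by blast
    show "recolour V (\<psi> \<circ> the_inv_into I \<phi>) ` proper_colourings V E m \<subseteq> proper_colourings V E m'"
      using recolour_mem_proper_colourings[OF G \<phi>(1) \<psi> m m' m_m'] by blast
    show "recolour V (\<phi> \<circ> the_inv_into I \<psi>) ` proper_colourings V E m' \<subseteq> proper_colourings V E m"
      using recolour_mem_proper_colourings[OF G \<psi>(1) \<phi> m' m] m_m' by auto
  qed
  then show ?thesis
    by (simp add: chrom_series_eq_card bij_betw_same_card)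
qed

lemma strict_mono_on_nth: "sorted_wrt (<) xs \<Longrightarrow> strict_mono_on {..<length xs} (nth xs)"
  by (rule strict_mono_onI) (simp add: sorted_wrt_nth_less)

lemma mono_of_support: "{i. mono_of xs \<alpha> i \<noteq> 0} \<subseteq> nth xs ` {..<length xs}"
  by (auto simp: mono_of_def dest!: sum.not_neutral_contains_not_neutral split: if_splits)

lemma mono_of_nth:
  assumes "distinct xs" "t < length xs"
  shows "mono_of xs \<alpha> (xs ! t) = \<alpha> ! t"
proof -
  have "mono_of xs \<alpha> (xs ! t) = (\<Sum>s<length xs. if s = t then \<alpha> ! s else 0)"
    unfolding mono_of_def using assms by (intro sum.cong) (auto simp: nth_eq_iff_index_eq)
  also have "\<dots> = \<alpha> ! t"
    using assms by (simp add: sum.delta)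
  finally show ?thesis .
qed

lemma chrom_series_mono_of_eq:
  assumes G: "ec_digraph V E"
    and "length is = length \<alpha>" "length js = length \<alpha>" "sorted_wrt (<) is" "sorted_wrt (<) js"
    and "0 \<notin> set is" "0 \<notin> set js"
  shows "chrom_series V E (mono_of is \<alpha>) = chrom_series V E (mono_of js \<alpha>)"
proof (rule chrom_series_eq_if_order_embeddings[OF G])
  show "strict_mono_on {..<length \<alpha>} (nth is)" "strict_mono_on {..<length \<alpha>} (nth js)"
    using assms strict_mono_on_nth by metis+
  show "0 \<notin> nth is ` {..<length \<alpha>}" "0 \<notin> nth js ` {..<length \<alpha>}"
    using assms by (metis imageE lessThan_iff nth_mem)+
  show "{i. mono_of is \<alpha> i \<noteq> 0} \<subseteq> nth is ` {..<length \<alpha>}"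
    "{j. mono_of js \<alpha> j \<noteq> 0} \<subseteq> nth js ` {..<length \<alpha>}"
    using assms mono_of_support by metis+
  show "\<forall>t\<in>{..<length \<alpha>}. mono_of is \<alpha> (is ! t) = mono_of js \<alpha> (js ! t)"
    using assms by (simp add: mono_of_nth strict_sorted_iff)
qed

theorem mainTheorem6:
  fixes V :: "'v set" and E :: "'v \<times> 'v \<Rightarrow> edge_type option"
  assumes "ec_digraph V E"
  shows "chrom_series V E \<in> QSym"
  unfolding QSym_def
proof (intro CollectI conjI)
  show "\<forall>m. chrom_series V E m \<noteq> 0 \<longrightarrow> finite {i. m i \<noteq> 0} \<and> m 0 = 0"
    using chrom_series_nonzero[OF assms] by simp
  show "\<exists>d. \<forall>m. chrom_series V E m \<noteq> 0 \<longrightarrow> (\<Sum>i\<in>{i. m i \<noteq> 0}. m i) \<le> d"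
    using chrom_series_nonzero[OF assms] by (intro exI[of _ "card V"]) simp
  show "\<forall>\<alpha> is js. is_composition \<alpha> \<and> length is = length \<alpha> \<and> length js = length \<alpha> \<and>
      sorted_wrt (<) is \<and> sorted_wrt (<) js \<and> (\<forall>i\<in>set is. 1 \<le> i) \<and> (\<forall>j\<in>set js. 1 \<le> j)
      \<longrightarrow> chrom_series V E (mono_of is \<alpha>) = chrom_series V E (mono_of js \<alpha>)"
    by (intro allI impI, elim conjE, rule chrom_series_mono_of_eq[OF assms]) auto
qed

end
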